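(* Let $(\mathcal{F}_\alpha)_{\alpha<\omega_1}$ be a transfinite family, $\mathcal{A}\subset[\mathbb{N}]^{<\infty}$ hereditary and $P\subset\mathbb{N}$ infinite. Suppose that for every $\alpha<\omega_1$ there is an infinite $N_\alpha\subset P$ with $\mathcal{F}_\alpha^{N_\alpha}\subset\mathcal{A}$. Then there is an infinite $L\subset P$ such that $[L]^{<\infty}\subset\mathcal{A}$.
   Context: An approximating family assigns to each countable limit ordinal $\alpha$ finite sets $A_n(\alpha)\subset[0,\alpha)$, $n\in\mathbb{N}$, with $A_n(\alpha)\subset A_{n+1}(\alpha)$ and $\lim_n\max A_n(\alpha)=\alpha$. The transfinite family it defines: $\mathcal{F}_0=\{\emptyset\}$; $\mathcal{F}_{\beta+1}=\{\{n\}\cup E:n\in\mathbb{N},E\in\mathcal{F}_\beta\}\cup\{\emptyset\}$; for limit $\alpha$, $\mathcal{F}_\alpha=\{\emptyset\}\cup\{E\ne\emptyset:E\in\bigcup_{\beta\in A_{\min E}(\alpha)}\mathcal{F}_\beta\}$. For $N=\{n_1<n_2<\dots\}$, $\mathcal{F}^N=\{\{n_i:i\in E\}:E\in\mathcal{F}\}$. $[L]^{<\infty}$ denotes the finite subsets of $L$; hereditary = closed under subsets. *)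

theory Defs
  imports Main "HOL-Library.Countable_Set"
begin

text \<open>Countable ordinals are modelled by a well-ordered type 'o that is order-isomorphic
  to omega_1: every proper initial segment is countable and the type itself is uncountable.\<close>

definition omega1_type :: "('o::wellorder) itself \<Rightarrow> bool" where
  "omega1_type _ \<longleftrightarrow> (\<forall>a::'o. countable {..<a}) \<and> \<not> countable (UNIV :: 'o set)"

definition ozero :: "'o::wellorder" where
  "ozero = (LEAST a. True)"

definition osucc :: "'o::wellorder \<Rightarrow> 'o" where
  "osucc b = (LEAST c. b < c)"

definition olimit :: "'o::wellorder \<Rightarrow> bool" where
  "olimit a \<longleftrightarrow> (\<exists>b. b < a) \<and> (\<forall>b<a. \<exists>c. b < c \<and> c < a)"

definition approximating_family :: "('o::wellorder \<Rightarrow> nat \<Rightarrow> 'o set) \<Rightarrow> bool" where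
  "approximating_family A \<longleftrightarrow>
     (\<forall>a. olimit a \<longrightarrow>
        (\<forall>n. finite (A a n) \<and> A a n \<subseteq> {..<a} \<and> A a n \<subseteq> A a (Suc n)) \<and>
        (\<forall>b<a. \<exists>n. \<exists>c\<in>A a n. b \<le> c))"

definition transfinite_family ::
    "('o::wellorder \<Rightarrow> nat \<Rightarrow> 'o set) \<Rightarrow> ('o \<Rightarrow> nat set set) \<Rightarrow> bool" where
  "transfinite_family A F \<longleftrightarrow>
     F ozero = {{}} \<and>
     (\<forall>b. F (osucc b) = {insert n E | n E. E \<in> F b} \<union> {{}}) \<and>
     (\<forall>a. olimit a \<longrightarrow>
        F a = {{}} \<union> {E. E \<noteq> {} \<and> E \<in> (\<Union>b\<in>A a (Min E). F b)})"

text \<open>F^N = { {n_i : i in E} : E in F } where n_0 < n_1 < ... enumerates N.\<close>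

definition spread :: "nat set set \<Rightarrow> nat set \<Rightarrow> nat set set" where
  "spread F N = (\<lambda>E. enumerate N ` E) ` F"

definition hereditary :: "nat set set \<Rightarrow> bool" where
  "hereditary \<A> \<longleftrightarrow> (\<forall>E\<in>\<A>. \<forall>D. D \<subseteq> E \<longrightarrow> D \<in> \<A>)"

end

theory Submission
  imports Defs
begin

text \<open>For a finite set t, call an ordinal a an extension ordinal of t if some infinite
  N \<subseteq> P lying above t satisfies t \<union> E \<in> \<A> for every E in F a spread along N.
  By hypothesis every ordinal is an extension ordinal of the empty set. From an extension
  ordinal a of t and any g < a one descends to an extension ordinal \<ge> g of t \<union> {n} for
  some n \<in> P above t: at a successor split off the first element of N, at a limit pass to
  an approximant and shift N. Hence if the extension ordinals of t are cofinal in omega_1,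
  so are those of some t \<union> {n}, since otherwise the countably many bounds would have a
  common bound g. Iterating yields n_1 < n_2 < ... in P whose finite initial segments all
  lie in \<A>.\<close>

lemma ozero_le: "(ozero::'o::wellorder) \<le> a"
  unfolding ozero_def by (rule Least_le) simp

lemma osucc_le: "(b::'o::wellorder) < c \<Longrightarrow> osucc b \<le> c"
  unfolding osucc_def by (rule Least_le)

lemma ordinal_cases:
  fixes a :: "'o::wellorder"
  obtains "a = ozero" | b where "b < a" "a = osucc b" | "olimit a"
proof -
  consider "a = ozero" | "ozero < a" "\<not> olimit a" | "olimit a"
    using ozero_le[of a] by force
  then show thesis
  proof cases
    case 2
    then obtain b where b: "b < a" "\<forall>c. b < c \<longrightarrow> \<not> c < a"
      unfolding olimit_def by blast
    have "b < osucc b"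
      unfolding osucc_def using b(1) by (rule LeastI)
    with b osucc_le[OF b(1)] have "a = osucc b"
      using order.order_iff_strict by blast
    with b(1) show thesis by (rule that(2))
  qed (use that in auto)
qed

lemma ordinal_induct [case_names zero succ limit]:
  fixes a :: "'o::wellorder"
  assumes "P ozero"
    and "\<And>b. P b \<Longrightarrow> P (osucc b)"
    and "\<And>a. olimit a \<Longrightarrow> (\<And>b. b < a \<Longrightarrow> P b) \<Longrightarrow> P a"
  shows "P a"
proof (induction a rule: less_induct)
  case (less a)
  show ?case
  proof (cases a rule: ordinal_cases)
    case 1
    then show ?thesis using assms(1) by simp
  next
    case (2 b)
    then show ?thesis using assms(2) less by simp
  next
    case 3
    then show ?thesis using assms(3) less by blast
  qed
qed

lemma omega1_type_countable_bounded:
  assumes "omega1_type TYPE('o::wellorder)" and "countable (C::'o set)"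
  obtains g where "\<forall>c\<in>C. c < g"
proof (rule ccontr)
  assume "\<not> thesis"
  with that have "\<forall>g. \<exists>c\<in>C. g \<le> c"
    by (meson not_less)
  then have "UNIV \<subseteq> (\<Union>c\<in>C. insert c {..<c})"
    by (auto simp: order_le_less)
  moreover have "countable (\<Union>c\<in>C. insert c {..<c})"
    using assms unfolding omega1_type_def by (intro countable_UN) auto
  ultimately show False
    using assms(1) countable_subset unfolding omega1_type_def by blast
qed

lemma omega1_type_gt_ex: "omega1_type TYPE('o::wellorder) \<Longrightarrow> \<exists>b. (a::'o) < b"
  using omega1_type_countable_bounded[of "{a}"] by auto

lemma approximating_family_less:
  "approximating_family A \<Longrightarrow> olimit a \<Longrightarrow> c \<in> A a n \<Longrightarrow> c < a"
  unfolding approximating_family_def by blast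

lemma approximating_family_mono:
  assumes "approximating_family A" and "olimit a" and "m \<le> m'"
  shows "A a m \<subseteq> A a m'"
proof -
  have "A a n \<subseteq> A a (Suc n)" for n
    using assms(1,2) unfolding approximating_family_def by blast
  then show ?thesis
    using lift_Suc_mono_le[of "A a"] assms(3) by blast
qed

lemma approximating_family_cofinal:
  "approximating_family A \<Longrightarrow> olimit a \<Longrightarrow> b < a \<Longrightarrow> \<exists>n. \<exists>c\<in>A a n. b \<le> c"
  unfolding approximating_family_def by blast

lemma transfinite_familyD:
  assumes "transfinite_family A F"
  shows "F ozero = {{}}"
    and "F (osucc b) = {insert n E | n E. E \<in> F b} \<union> {{}}"
    and "olimit a \<Longrightarrow> F a = {{}} \<union> {E. E \<noteq> {} \<and> E \<in> (\<Union>c\<in>A a (Min E). F c)}"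
  using assms unfolding transfinite_family_def by simp_all

lemma transfinite_family_empty: "transfinite_family A F \<Longrightarrow> {} \<in> F a"
  by (cases a rule: ordinal_cases) (auto simp: transfinite_familyD)

lemma transfinite_family_finite:
  assumes ap: "approximating_family A" and tf: "transfinite_family A F"
  shows "E \<in> F a \<Longrightarrow> finite E"
proof (induction a arbitrary: E rule: ordinal_induct)
  case zero
  then show ?case by (simp add: transfinite_familyD(1)[OF tf])
next
  case (succ b)
  then show ?case by (auto simp: transfinite_familyD(2)[OF tf])
next
  case (limit a)
  have "E = {} \<or> (\<exists>c\<in>A a (Min E). E \<in> F c)"
    using limit.prems transfinite_familyD(3)[OF tf limit.hyps] by blast
  then show ?case
    using approximating_family_less[OF ap limit.hyps] limit.IH by blast
qed

lemma transfinite_family_limitI: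
  assumes ap: "approximating_family A" and tf: "transfinite_family A F"
    and a: "olimit a" and c: "c \<in> A a m" and E: "E \<in> F c" "\<forall>x\<in>E. m \<le> x"
  shows "E \<in> F a"
proof (cases "E = {}")
  case True
  then show ?thesis using transfinite_family_empty[OF tf] by simp
next
  case False
  have "m \<le> Min E"
    using E False transfinite_family_finite[OF ap tf] by simp
  then have "c \<in> A a (Min E)"
    using approximating_family_mono[OF ap a] c by blast
  with E False show ?thesis
    by (auto simp: transfinite_familyD(3)[OF tf a])
qed

lemma transfinite_family_shift:
  assumes ap: "approximating_family A" and tf: "transfinite_family A F"
  shows "E \<in> F a \<Longrightarrow> (\<lambda>i. i + m) ` E \<in> F a"
proof (induction a arbitrary: E rule: ordinal_induct)
  case zero
  then show ?case by (simp add: transfinite_familyD(1)[OF tf])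
next
  case (succ b)
  then show ?case by (force simp: transfinite_familyD(2)[OF tf])
next
  case (limit a)
  show ?case
  proof (cases "E = {}")
    case True
    then show ?thesis using transfinite_family_empty[OF tf] by simp
  next
    case False
    then obtain c where c: "c \<in> A a (Min E)" "E \<in> F c"
      using limit.prems by (auto simp: transfinite_familyD(3)[OF tf limit.hyps])
    have "(\<lambda>i. i + m) ` E \<in> F c"
      using limit.IH approximating_family_less[OF ap limit.hyps c(1)] c(2) .
    moreover have "\<forall>x\<in>(\<lambda>i. i + m) ` E. Min E \<le> x"
      using transfinite_family_finite[OF ap tf c(2)] by (auto intro!: trans_le_add1)
    ultimately show ?thesis
      using transfinite_family_limitI[OF ap tf limit.hyps c(1)] by blast
  qed
qed

lemma enumerate_shift:
  fixes N :: "'a::wellorder set"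
  assumes "infinite N"
  obtains N' where "N' \<subseteq> N" "infinite N'" "\<And>i. enumerate N' i = enumerate N (i + m)"
proof -
  have "\<exists>N'\<subseteq>N. infinite N' \<and> (\<forall>i. enumerate N' i = enumerate N (i + m))"
  proof (induction m)
    case 0
    show ?case using assms by (intro exI[of _ N]) simp
  next
    case (Suc m)
    then obtain N' where N': "N' \<subseteq> N" "infinite N'" "\<forall>i. enumerate N' i = enumerate N (i + m)"
      by blast
    have "enumerate (N' - {enumerate N' 0}) i = enumerate N' (Suc i)" for i
      by (simp only: enumerate_Suc')
    then have "enumerate (N' - {enumerate N' 0}) i = enumerate N (i + Suc m)" for i
      using N'(3) by simp
    moreover have "N' - {enumerate N' 0} \<subseteq> N" "infinite (N' - {enumerate N' 0})"
      using N' by auto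
    ultimately show ?case by blast
  qed
  with that show thesis by blast
qed

definition extension_ordinals ::
    "('o \<Rightarrow> nat set set) \<Rightarrow> nat set set \<Rightarrow> nat set \<Rightarrow> nat set \<Rightarrow> 'o set" where
  "extension_ordinals F \<A> P t =
     {a. \<exists>N\<subseteq>P. infinite N \<and> (\<forall>x\<in>N. \<forall>y\<in>t. y < x) \<and> (\<forall>E\<in>F a. t \<union> enumerate N ` E \<in> \<A>)}"

definition extensible ::
    "('o::order \<Rightarrow> nat set set) \<Rightarrow> nat set set \<Rightarrow> nat set \<Rightarrow> nat set \<Rightarrow> bool" where
  "extensible F \<A> P t \<longleftrightarrow> (\<forall>g. \<exists>a\<in>extension_ordinals F \<A> P t. g \<le> a)"

lemma extension_ordinals_osucc:
  assumes ap: "approximating_family A" and tf: "transfinite_family A F"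
    and b: "osucc b \<in> extension_ordinals F \<A> P t"
  shows "\<exists>n\<in>P. (\<forall>y\<in>t. y < n) \<and> b \<in> extension_ordinals F \<A> P (insert n t)"
proof -
  obtain N where N: "N \<subseteq> P" "infinite N" "\<forall>x\<in>N. \<forall>y\<in>t. y < x"
    and N_ext: "\<forall>E\<in>F (osucc b). t \<union> enumerate N ` E \<in> \<A>"
    using b unfolding extension_ordinals_def by blast
  define n where "n = enumerate N 0"
  define N' where "N' = N - {n}"
  have "n \<in> N"
    unfolding n_def using N(2) by (rule enumerate_in_set)
  have n_less: "\<forall>x\<in>N'. n < x"
    unfolding N'_def n_def enumerate_0 by (metis DiffE Least_le insertCI order_le_less)
  have enum_N': "enumerate N' i = enumerate N (Suc i)" for i
    unfolding N'_def n_def by (simp add: enumerate_Suc')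
  have "b \<in> extension_ordinals F \<A> P (insert n t)"
    unfolding extension_ordinals_def
  proof (intro CollectI exI conjI ballI)
    show "N' \<subseteq> P" "infinite N'"
      using N unfolding N'_def by auto
    show "y < x" if "x \<in> N'" "y \<in> insert n t" for x y
      using that n_less N(3) unfolding N'_def by auto
  next
    fix E
    assume "E \<in> F b"
    then have "(\<lambda>i. i + 1) ` E \<in> F b"
      by (rule transfinite_family_shift[OF ap tf])
    then have "insert 0 ((\<lambda>i. i + 1) ` E) \<in> F (osucc b)"
      unfolding transfinite_familyD(2)[OF tf] by blast
    then have "t \<union> enumerate N ` insert 0 ((\<lambda>i. i + 1) ` E) \<in> \<A>"
      using N_ext by blast
    moreover have "t \<union> enumerate N ` insert 0 ((\<lambda>i. i + 1) ` E) = insert n t \<union> enumerate N' ` E"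
      using enum_N' by (auto simp: n_def image_image)
    ultimately show "insert n t \<union> enumerate N' ` E \<in> \<A>"
      by simp
  qed
  with \<open>n \<in> N\<close> N(1,3) show ?thesis
    by blast
qed

lemma extension_ordinals_approximant:
  assumes ap: "approximating_family A" and tf: "transfinite_family A F"
    and a: "olimit a" "a \<in> extension_ordinals F \<A> P t" and c: "c \<in> A a m"
  shows "c \<in> extension_ordinals F \<A> P t"
proof -
  obtain N where N: "N \<subseteq> P" "infinite N" "\<forall>x\<in>N. \<forall>y\<in>t. y < x"
    and N_ext: "\<forall>E\<in>F a. t \<union> enumerate N ` E \<in> \<A>"
    using a(2) unfolding extension_ordinals_def by blast
  obtain N' where N': "N' \<subseteq> N" "infinite N'" "\<And>i. enumerate N' i = enumerate N (i + m)"
    using enumerate_shift[OF N(2)] by blast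
  show ?thesis
    unfolding extension_ordinals_def
  proof (intro CollectI exI conjI ballI)
    show "N' \<subseteq> P" "infinite N'"
      using N N' by auto
    show "y < x" if "x \<in> N'" "y \<in> t" for x y
      using that N'(1) N(3) by blast
  next
    fix E
    assume "E \<in> F c"
    then have "(\<lambda>i. i + m) ` E \<in> F a"
      using transfinite_family_limitI[OF ap tf a(1) c] transfinite_family_shift[OF ap tf] by auto
    then have "t \<union> enumerate N ` (\<lambda>i. i + m) ` E \<in> \<A>"
      using N_ext by blast
    moreover have "enumerate N ` (\<lambda>i. i + m) ` E = enumerate N' ` E"
      using N'(3) by (auto simp: image_image)
    ultimately show "t \<union> enumerate N' ` E \<in> \<A>"
      by simp
  qed
qed

lemma extension_ordinals_descent:
  assumes ap: "approximating_family A" and tf: "transfinite_family A F"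
  shows "a \<in> extension_ordinals F \<A> P t \<Longrightarrow> g < a \<Longrightarrow>
    \<exists>n\<in>P. (\<forall>y\<in>t. y < n) \<and> (\<exists>b\<ge>g. b \<in> extension_ordinals F \<A> P (insert n t))"
proof (induction a rule: ordinal_induct)
  case zero
  then show ?case using ozero_le[of g] by simp
next
  case (succ b)
  have "g \<le> b"
    using osucc_le[of b g] succ.prems(2) by (meson leD le_less_linear)
  with succ.prems(1) show ?case
    using extension_ordinals_osucc[OF ap tf] by blast
next
  case (limit a)
  obtain c' where "g < c'" "c' < a"
    using limit.hyps limit.prems(2) unfolding olimit_def by blast
  then obtain m c where c: "c \<in> A a m" "g < c"
    using approximating_family_cofinal[OF ap limit.hyps] by (meson order_less_le_trans)
  then show ?case
    using limit.IH approximating_family_less[OF ap limit.hyps]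
      extension_ordinals_approximant[OF ap tf limit.hyps limit.prems(1)] by blast
qed

lemma extensible_insert:
  assumes om: "omega1_type TYPE('o::wellorder)"
    and ap: "approximating_family (A :: 'o \<Rightarrow> nat \<Rightarrow> 'o set)"
    and tf: "transfinite_family A F"
    and t: "extensible F \<A> P t"
  shows "\<exists>n\<in>P. (\<forall>y\<in>t. y < n) \<and> extensible F \<A> P (insert n t)"
proof (rule ccontr)
  define V where "V = {n\<in>P. \<forall>y\<in>t. y < n}"
  assume none: "\<not> ?thesis"
  have "\<exists>h. \<forall>b\<in>extension_ordinals F \<A> P (insert n t). b < h" if "n \<in> V" for n
  proof -
    have "\<not> extensible F \<A> P (insert n t)"
      using that none unfolding V_def by blast
    then show ?thesis
      unfolding extensible_def by (meson not_le)
  qed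
  then obtain h where h: "\<forall>n\<in>V. \<forall>b\<in>extension_ordinals F \<A> P (insert n t). b < h n"
    by (metis bchoice)
  have "countable (h ` V)"
    by simp
  then obtain g where g: "\<forall>c\<in>h ` V. c < g"
    by (rule omega1_type_countable_bounded[OF om])
  obtain a where a: "a \<in> extension_ordinals F \<A> P t" "g < a"
    using t omega1_type_gt_ex[OF om, of g] unfolding extensible_def
    by (meson order_less_le_trans)
  then obtain n b where n: "n \<in> V" and b: "g \<le> b" "b \<in> extension_ordinals F \<A> P (insert n t)"
    using extension_ordinals_descent[OF ap tf] unfolding V_def by blast
  have "b < h n"
    using h n b(2) by blast
  also have "h n < g"
    using g n by blast
  finally show False
    using b(1) by simp
qed

lemma extensible_mem:
  assumes "transfinite_family A F" and "extensible F \<A> P t"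
  shows "t \<in> \<A>"
proof -
  obtain a where "a \<in> extension_ordinals F \<A> P t"
    using assms(2) unfolding extensible_def by blast
  then obtain N where "\<forall>E\<in>F a. t \<union> enumerate N ` E \<in> \<A>"
    unfolding extension_ordinals_def by blast
  then have "t \<union> enumerate N ` {} \<in> \<A>"
    using transfinite_family_empty[OF assms(1)] by blast
  then show ?thesis
    by simp
qed

lemma exists_infinite_set_by_extension:
  fixes P :: "nat set"
  assumes "hereditary \<A>" and "Q {}"
    and step: "\<And>t. Q t \<Longrightarrow> \<exists>n\<in>P. (\<forall>y\<in>t. y < n) \<and> Q (insert n t)"
    and mem: "\<And>t. Q t \<Longrightarrow> t \<in> \<A>"
  shows "\<exists>L\<subseteq>P. infinite L \<and> {E. finite E \<and> E \<subseteq> L} \<subseteq> \<A>"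
proof -
  define pick where "pick t = (SOME n. n \<in> P \<and> (\<forall>y\<in>t. y < n) \<and> Q (insert n t))" for t
  have pick: "pick t \<in> P \<and> (\<forall>y\<in>t. y < pick t) \<and> Q (insert (pick t) t)" if "Q t" for t
  proof -
    have "\<exists>n. n \<in> P \<and> (\<forall>y\<in>t. y < n) \<and> Q (insert n t)"
      using step[OF that] by blast
    then show ?thesis
      unfolding pick_def by (rule someI_ex)
  qed
  define T where "T k = ((\<lambda>t. insert (pick t) t) ^^ k) {}" for k
  have T_0: "T 0 = {}" and T_Suc: "T (Suc k) = insert (pick (T k)) (T k)" for k
    unfolding T_def by simp_all
  have Q_T: "Q (T k)" for k
    by (induction k) (use \<open>Q {}\<close> pick in \<open>simp_all add: T_0 T_Suc\<close>)
  have T_P: "T k \<subseteq> P" for k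
    by (induction k) (use pick Q_T in \<open>simp_all add: T_0 T_Suc\<close>)
  have card_T: "finite (T k) \<and> card (T k) = k" for k
  proof (induction k)
    case 0
    then show ?case by (simp add: T_0)
  next
    case (Suc k)
    moreover have "pick (T k) \<notin> T k"
      using pick Q_T by blast
    ultimately show ?case by (simp add: T_Suc)
  qed
  have T_mono: "T k \<subseteq> T k'" if "k \<le> k'" for k k'
    using lift_Suc_mono_le[of T, OF _ that] T_Suc by blast
  have chain: "subset.chain UNIV (range T)"
    unfolding subset.chain_def using T_mono nat_le_linear by blast
  define L where "L = (\<Union>k. T k)"
  have "L \<subseteq> P"
    unfolding L_def using T_P by blast
  moreover have "infinite L"
  proof
    assume "finite L"
    moreover have "T (Suc (card L)) \<subseteq> L"
      unfolding L_def by blast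
    ultimately have "card (T (Suc (card L))) \<le> card L"
      by (rule card_mono)
    then show False
      using card_T by simp
  qed
  moreover have "E \<in> \<A>" if "finite E" "E \<subseteq> L" for E
  proof -
    obtain B where "B \<in> range T" "E \<subseteq> B"
      using finite_subset_Union_chain[OF \<open>finite E\<close> _ _ chain] \<open>E \<subseteq> L\<close>
      unfolding L_def by blast
    then show ?thesis
      using mem Q_T \<open>hereditary \<A>\<close> unfolding hereditary_def by blast
  qed
  ultimately show ?thesis
    by blast
qed

theorem corollary4p5:
  fixes A :: "'o::wellorder \<Rightarrow> nat \<Rightarrow> 'o set"
    and F :: "'o \<Rightarrow> nat set set"
    and \<A> :: "nat set set"
    and P :: "nat set"
  assumes "omega1_type TYPE('o)"
    and "approximating_family A"
    and "transfinite_family A F"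
    and "\<forall>E\<in>\<A>. finite E"
    and "hereditary \<A>"
    and "infinite P"
    and "\<forall>a. \<exists>N. N \<subseteq> P \<and> infinite N \<and> spread (F a) N \<subseteq> \<A>"
  shows "\<exists>L. L \<subseteq> P \<and> infinite L \<and> {E. finite E \<and> E \<subseteq> L} \<subseteq> \<A>"
proof -
  have "a \<in> extension_ordinals F \<A> P {}" for a
    using assms(7) unfolding extension_ordinals_def spread_def by (simp add: image_subset_iff)
  then have "extensible F \<A> P {}"
    unfolding extensible_def by blast
  with assms(5) have "\<exists>L\<subseteq>P. infinite L \<and> {E. finite E \<and> E \<subseteq> L} \<subseteq> \<A>"
    using extensible_insert[OF assms(1-3)] extensible_mem[OF assms(3)]
    by (rule exists_infinite_set_by_extension)
  then show ?thesis
    by blast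
qed

end
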